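(* Let $\alpha=(\alpha^+,0,\dots,0)\in[0,\infty)^n$ with $\alpha^+\in(0,\infty)^l$, and let $\Lambda_\alpha=\begin{pmatrix}\Lambda_{\alpha^+}&0\\0&0\end{pmatrix}$. Let $\Gamma_1$ be a circle in $\mathbb{C}$ enclosing all entries of $\alpha^+$ but not $0$, and $\Gamma_0$ a circle enclosing $0$ but no entry of $\alpha^+$. For Hermitian $\tilde E$ (small enough that $\Lambda_\alpha+\tilde E$ has no eigenvalue on $\Gamma_0\cup\Gamma_1$) define $$P_i(\tilde E)=\frac{1}{2\pi i}\int_{\Gamma_i}(zI-(\Lambda_\alpha+\tilde E))^{-1}\,dz,\quad i=0,1,$$ and write $\tilde E=\begin{pmatrix}\tilde B&\tilde C\\ \tilde C^*&\tilde D\end{pmatrix}$ with respect to $\mathbb{C}^n=\mathbb{C}^l\oplus\mathbb{C}^{n-l}$. Then $$P_1(\tilde E)=\begin{pmatrix} I & \Lambda_{\alpha^+}^{-1}\tilde C\\ \tilde C^*\Lambda_{\alpha^+}^{-1} & 0\end{pmatrix}+O(\|\tilde E\|^2),\qquad P_0(\tilde E)=\begin{pmatrix} 0 & -\Lambda_{\alpha^+}^{-1}\tilde C\\ -\tilde C^*\Lambda_{\alpha^+}^{-1} & I\end{pmatrix}+O(\|\tilde E\|^2),$$ where the size of the errors is locally independent of $\alpha^+$ (the implicit constants and neighborhoods can be chosen uniformly for $\alpha^+$ in a neighborhood of the given one).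
   Context: $\Lambda_v$ denotes the diagonal matrix with the vector $v$ on its diagonal; $\|\cdot\|$ is any matrix norm. *)

theory Defs
  imports "HOL-Complex_Analysis.Complex_Analysis"
begin

definition diag_real :: "real^'n \<Rightarrow> complex^'n^'n" where
  "diag_real v = (\<chi> i j. if i = j then complex_of_real (v $ i) else 0)"

definition hermitian :: "complex^'n^'n \<Rightarrow> bool" where
  "hermitian E \<longleftrightarrow> (\<forall>i j. E $ i $ j = cnj (E $ j $ i))"

definition riesz_proj :: "(real \<Rightarrow> complex) \<Rightarrow> complex^'n^'n \<Rightarrow> complex^'n^'n" where
  "riesz_proj \<Gamma> A =
     (\<chi> i j. contour_integral \<Gamma> (\<lambda>z. matrix_inv (mat z - A) $ i $ j) / (2 * complex_of_real pi * \<i>))"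

text \<open>Block decomposition with respect to the index set S (the block of alpha^+) and its
  complement.\<close>
definition approx_P1 :: "'n set \<Rightarrow> real^'n \<Rightarrow> complex^'n^'n \<Rightarrow> complex^'n^'n" where
  "approx_P1 S a E = (\<chi> i j.
     if i \<in> S \<and> j \<in> S then (if i = j then 1 else 0)
     else if i \<in> S \<and> j \<notin> S then E $ i $ j / complex_of_real (a $ i)
     else if i \<notin> S \<and> j \<in> S then cnj (E $ j $ i) / complex_of_real (a $ j)
     else 0)"

definition approx_P0 :: "'n set \<Rightarrow> real^'n \<Rightarrow> complex^'n^'n \<Rightarrow> complex^'n^'n" where
  "approx_P0 S a E = (\<chi> i j.
     if i \<in> S \<and> j \<in> S then 0
     else if i \<in> S \<and> j \<notin> S then - (E $ i $ j / complex_of_real (a $ i))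
     else if i \<notin> S \<and> j \<in> S then - (cnj (E $ j $ i) / complex_of_real (a $ j))
     else (if i = j then 1 else 0))"

end

(*
  Put A = diag beta + E and R0(z) = (z - diag beta)^-1.  If every diagonal entry of diag beta
  stays at distance at least e from a circle and E is small, the resolvent identity
  (z - A)^-1 = R0 + R0 E R0 + R0 E R0 E (z - A)^-1 shows that (z - A)^-1 differs from
  R0 + R0 E R0 by O(|E|^2), uniformly on the circle.  Integrating, the Riesz projection agrees
  up to O(|E|^2) with the integral of R0 + R0 E R0, whose entries are the integrals of
  1/(z - beta_i) and E_ij/((z - beta_i)(z - beta_j)): winding numbers and divided differences of
  winding numbers.  For beta close to alpha, Gamma_1 winds once around the positive entries and
  not around 0, and Gamma_0 the other way round, which turns these first-order terms into the
  block matrices of the statement.  All constants depend only on the gap e, the dimension and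
  the radii.
*)

theory Submission
  imports Defs
begin

no_notation fps_nth (infixl \<open>$\<close> 75)

text \<open>The norm of a matrix type is the Frobenius norm; the entrywise l1 norm below is easier to
  show submultiplicative and is equivalent to it up to dimension factors.\<close>

definition mat_l1 :: "'a::real_normed_vector^'n^'m \<Rightarrow> real" where
  "mat_l1 X = (\<Sum>i\<in>UNIV. \<Sum>j\<in>UNIV. norm (X $ i $ j))"

lemma mat_l1_nonneg: "0 \<le> mat_l1 X"
  unfolding mat_l1_def by (intro sum_nonneg norm_ge_zero)

lemma row_norm_le_mat_l1: "(\<Sum>j\<in>UNIV. norm (X $ i $ j)) \<le> mat_l1 X"
  unfolding mat_l1_def
  by (rule member_le_sum[where f="\<lambda>i. \<Sum>j\<in>UNIV. norm (X $ i $ j)"]) (auto intro: sum_nonneg)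

lemma entry_norm_le_mat_l1: "norm (X $ i $ j) \<le> mat_l1 X"
  by (rule order_trans[OF member_le_sum row_norm_le_mat_l1]) auto

lemma mat_l1_eq_0_iff: "mat_l1 X = 0 \<longleftrightarrow> X = 0"
proof
  assume "mat_l1 X = 0"
  then have "norm (X $ i $ j) = 0" for i j
    using entry_norm_le_mat_l1[of X i j] norm_ge_zero[of "X $ i $ j"] by linarith
  then show "X = 0" by (simp add: vec_eq_iff)
qed (simp add: mat_l1_def)

lemma mat_l1_add: "mat_l1 (X + Y) \<le> mat_l1 X + mat_l1 Y"
  unfolding mat_l1_def sum.distrib[symmetric]
  by (intro sum_mono) (simp add: norm_triangle_ineq)

lemma mat_l1_le_norm:
  fixes X :: "'a::real_normed_vector^'n^'m"
  shows "mat_l1 X \<le> real CARD('n) * real CARD('m) * norm X"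
proof -
  have "mat_l1 X \<le> (\<Sum>i\<in>(UNIV::'m set). \<Sum>j\<in>(UNIV::'n set). norm X)"
    unfolding mat_l1_def
    using order_trans[OF Finite_Cartesian_Product.norm_nth_le Finite_Cartesian_Product.norm_nth_le]
    by (intro sum_mono)
  then show ?thesis by (simp add: mult_ac)
qed

lemma norm_le_entry_bound:
  fixes X :: "'a::real_normed_vector^'n^'m"
  assumes "\<And>i j. norm (X $ i $ j) \<le> b"
  shows "norm X \<le> real CARD('m) * real CARD('n) * b"
proof -
  have row: "norm (X $ i) \<le> (\<Sum>j\<in>UNIV. norm (X $ i $ j))" for i
    by (simp add: norm_vec_def L2_set_le_sum)
  have "norm X \<le> (\<Sum>i\<in>UNIV. norm (X $ i))"
    by (simp add: norm_vec_def L2_set_le_sum)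
  also have "\<dots> \<le> (\<Sum>i\<in>(UNIV::'m set). \<Sum>j\<in>(UNIV::'n set). b)"
    by (intro sum_mono order_trans[OF row] assms)
  finally show ?thesis by (simp add: mult_ac)
qed

lemma mat_l1_mat: "mat_l1 (mat c :: 'a::real_normed_vector^'n^'n) = real CARD('n) * norm c"
  unfolding mat_l1_def mat_def by (simp add: if_distrib cong: if_cong)

lemma mat_l1_mult: "mat_l1 ((X :: 'a::real_normed_algebra_1^'k^'m) ** Y) \<le> mat_l1 X * mat_l1 Y"
proof -
  have "mat_l1 (X ** Y) \<le> (\<Sum>i\<in>UNIV. \<Sum>j\<in>UNIV. \<Sum>k\<in>UNIV. norm (X$i$k) * norm (Y$k$j))"
    unfolding mat_l1_def matrix_matrix_mult_def
    by (intro sum_mono) (simp add: order_trans[OF norm_sum sum_mono[OF norm_mult_ineq]])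
  also have "\<dots> = (\<Sum>i\<in>UNIV. \<Sum>k\<in>UNIV. \<Sum>j\<in>UNIV. norm (X$i$k) * norm (Y$k$j))"
    by (rule sum.cong[OF refl], rule sum.swap)
  also have "\<dots> = (\<Sum>i\<in>UNIV. \<Sum>k\<in>UNIV. norm (X$i$k) * (\<Sum>j\<in>UNIV. norm (Y$k$j)))"
    by (simp add: sum_distrib_left)
  also have "\<dots> \<le> (\<Sum>i\<in>UNIV. \<Sum>k\<in>UNIV. norm (X$i$k) * mat_l1 Y)"
    by (intro sum_mono mult_left_mono row_norm_le_mat_l1) auto
  also have "\<dots> = mat_l1 X * mat_l1 Y" by (simp add: mat_l1_def sum_distrib_right)
  finally show ?thesis .
qed

lemma matrix_diff_ldistrib: "(A::'a::ring_1^'n^'m) ** (B - C) = A ** B - A ** C"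
  by (simp add: matrix_matrix_mult_def vec_eq_iff sum_subtractf algebra_simps)

lemma matrix_diff_rdistrib: "((B - C)::'a::ring_1^'n^'m) ** A = B ** A - C ** A"
  by (simp add: matrix_matrix_mult_def vec_eq_iff sum_subtractf algebra_simps)

lemma mat_diff: "mat w - mat z = (mat (w - z) :: 'a::ring_1^'n^'n)"
  by (simp add: vec_eq_iff mat_def)

lemma matrix_inv_right:
  assumes "invertible (A :: 'a::semiring_1^'n^'m)"
  shows "A ** matrix_inv A = mat 1"
  using someI_ex[OF assms[unfolded invertible_def]] by (simp add: matrix_inv_def)

lemma matrix_inv_left:
  assumes "invertible (A :: 'a::semiring_1^'n^'m)"
  shows "matrix_inv A ** A = mat 1"
  using someI_ex[OF assms[unfolded invertible_def]] by (simp add: matrix_inv_def)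

lemma mat_l1_mult3:
  "mat_l1 ((X :: 'a::real_normed_algebra_1^'k^'m) ** Y ** W) \<le> mat_l1 X * mat_l1 Y * mat_l1 W"
  by (meson mat_l1_mult mat_l1_nonneg mult_right_mono order_trans)

lemma invertible_diff_if_small:
  fixes Z E R0 :: "'a::real_normed_field^'n^'n"
  assumes R0: "R0 ** Z = mat 1" and small: "mat_l1 R0 * mat_l1 E < 1"
  shows "invertible (Z - E)"
  unfolding invertible_left_inverse matrix_left_invertible_ker
proof (intro allI impI)
  fix x :: "'a^'n"
  assume x: "(Z - E) *v x = 0"
  \<comment> \<open>every column of V is x; then V = R0 E V, and mat_l1 R0 * mat_l1 E < 1 forces V = 0\<close>
  define V :: "'a^'n^'n" where "V = (\<chi> i j. x $ i)"
  have "(Z - E) ** V = 0"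
    using x by (simp add: V_def vec_eq_iff matrix_matrix_mult_def matrix_vector_mult_def)
  then have ZV: "Z ** V = E ** V"
    by (simp add: matrix_diff_rdistrib)
  have "V = R0 ** Z ** V"
    by (simp add: R0)
  also have "\<dots> = R0 ** E ** V"
    by (simp add: matrix_mul_assoc[symmetric] ZV)
  finally have "mat_l1 V \<le> mat_l1 R0 * mat_l1 E * mat_l1 V"
    by (metis mat_l1_mult3)
  with small mat_l1_nonneg[of V] have "mat_l1 V = 0"
    by (smt (verit) mult_less_cancel_right2)
  then show "x = 0"
    by (simp add: mat_l1_eq_0_iff V_def vec_eq_iff)
qed

lemma resolvent_second_order:
  fixes Z E R0 :: "'a::real_normed_field^'n^'n"
  assumes R0: "R0 ** Z = mat 1" and small: "mat_l1 R0 * mat_l1 E \<le> 1/2"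
  shows "invertible (Z - E)"
    and "mat_l1 (matrix_inv (Z - E)) \<le> 2 * mat_l1 R0"
    and "mat_l1 (matrix_inv (Z - E) - (R0 + R0 ** E ** R0)) \<le> 2 * mat_l1 R0 ^ 3 * mat_l1 E ^ 2"
proof -
  show inv: "invertible (Z - E)"
    using small by (intro invertible_diff_if_small[OF R0]) linarith
  define R where "R = matrix_inv (Z - E)"
  have "R0 = R0 ** ((Z - E) ** R)"
    by (simp add: R_def matrix_inv_right[OF inv])
  also have "\<dots> = R - R0 ** E ** R"
    by (simp add: matrix_mul_assoc matrix_diff_ldistrib matrix_diff_rdistrib R0)
  finally have sum: "R0 + R0 ** E ** R = R"
    by (simp only: eq_diff_eq)
  then have R_eq: "R = R0 + R0 ** E ** R"
    by (rule sym)
  have "R0 ** E ** R = (R0 + R0 ** E ** R) - R0"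
    by simp
  then have R_diff: "R - R0 = R0 ** E ** R"
    unfolding sum by (rule sym)
  have "mat_l1 R = mat_l1 (R0 + R0 ** E ** R)"
    by (rule arg_cong[OF R_eq])
  also have "\<dots> \<le> mat_l1 R0 + mat_l1 (R0 ** E ** R)"
    by (rule mat_l1_add)
  also have "\<dots> \<le> mat_l1 R0 + mat_l1 R0 * mat_l1 E * mat_l1 R"
    by (rule add_left_mono[OF mat_l1_mult3])
  also have "\<dots> \<le> mat_l1 R0 + 1/2 * mat_l1 R"
    using mult_right_mono[OF small mat_l1_nonneg] by simp
  finally show bound: "mat_l1 R \<le> 2 * mat_l1 R0"
    by simp
  have "R - (R0 + R0 ** E ** R0) = (R - R0) - R0 ** E ** R0"
    by (simp add: diff_diff_eq)
  also have "\<dots> = R0 ** E ** R - R0 ** E ** R0"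
    by (simp only: R_diff)
  also have "\<dots> = R0 ** E ** (R - R0)"
    by (simp add: matrix_diff_ldistrib matrix_mul_assoc)
  also have "\<dots> = R0 ** E ** (R0 ** E ** R)"
    by (simp only: R_diff)
  finally have "mat_l1 (R - (R0 + R0 ** E ** R0)) \<le> mat_l1 R0 * mat_l1 E * mat_l1 (R0 ** E ** R)"
    using mat_l1_mult3[of R0 E "R0 ** E ** R"] by simp
  also have "\<dots> \<le> mat_l1 R0 * mat_l1 E * (mat_l1 R0 * mat_l1 E * mat_l1 R)"
    by (intro mult_left_mono mat_l1_mult3 mult_nonneg_nonneg mat_l1_nonneg)
  also have "\<dots> \<le> mat_l1 R0 * mat_l1 E * (mat_l1 R0 * mat_l1 E * (2 * mat_l1 R0))"
    by (intro mult_left_mono bound mult_nonneg_nonneg mat_l1_nonneg)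
  finally show "mat_l1 (R - (R0 + R0 ** E ** R0)) \<le> 2 * mat_l1 R0 ^ 3 * mat_l1 E ^ 2"
    by (simp add: power2_eq_square power3_eq_cube mult_ac)
qed

lemma continuous_on_resolvent_entry:
  fixes A :: "'a::real_normed_field^'n^'n"
  assumes inv: "\<And>z. z \<in> S \<Longrightarrow> invertible (mat z - A)"
    and bound: "\<And>z. z \<in> S \<Longrightarrow> mat_l1 (matrix_inv (mat z - A)) \<le> M"
  shows "continuous_on S (\<lambda>z. matrix_inv (mat z - A) $ i $ j)"
proof (cases "S = {}")
  case False
  define R where "R z = matrix_inv (mat z - A)" for z
  have M: "0 \<le> M"
    using False bound mat_l1_nonneg by (meson ex_in_conv order_trans)
  have diff: "R z - R w = R z ** mat (w - z) ** R w" if "z \<in> S" "w \<in> S" for z w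
  proof -
    have "R z - R w = R z ** ((mat w - A) ** R w) - (R z ** (mat z - A)) ** R w"
      by (simp add: R_def matrix_inv_right matrix_inv_left inv that)
    also have "\<dots> = R z ** ((mat w - A) - (mat z - A)) ** R w"
      by (simp add: matrix_mul_assoc matrix_diff_ldistrib matrix_diff_rdistrib)
    finally show ?thesis
      by (simp add: mat_diff)
  qed
  have "norm (R z $ i $ j - R w $ i $ j) \<le> M * real CARD('n) * M * dist z w"
    if "z \<in> S" "w \<in> S" for z w
  proof -
    have "norm (R z $ i $ j - R w $ i $ j) = norm ((R z - R w) $ i $ j)"
      by simp
    also have "\<dots> \<le> mat_l1 (R z - R w)"
      by (rule entry_norm_le_mat_l1)
    also have "\<dots> = mat_l1 (R z ** mat (w - z) ** R w)"
      by (simp only: diff that)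
    also have "\<dots> \<le> mat_l1 (R z) * mat_l1 (mat (w - z) :: 'a^'n^'n) * mat_l1 (R w)"
      by (rule mat_l1_mult3)
    also have "\<dots> \<le> M * (real CARD('n) * dist z w) * M"
      using bound[OF that(1)] bound[OF that(2)] M
      by (intro mult_mono mult_nonneg_nonneg mat_l1_nonneg)
        (simp_all add: R_def mat_l1_mat dist_norm norm_minus_commute)
    finally show ?thesis
      by (simp add: mult_ac)
  qed
  with M have "(M * real CARD('n) * M)-lipschitz_on S (\<lambda>z. R z $ i $ j)"
    by (auto simp: lipschitz_on_def dist_norm)
  then show ?thesis
    unfolding R_def by (rule lipschitz_on_continuous_on)
qed simp

definition diag_resolvent :: "real^'n \<Rightarrow> complex \<Rightarrow> complex^'n^'n" where
  "diag_resolvent \<beta> z = (\<chi> i j. if i = j then 1 / (z - complex_of_real (\<beta> $ i)) else 0)"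

lemma diag_resolvent_mult:
  "(diag_resolvent \<beta> z ** X) $ i $ j = X $ i $ j / (z - complex_of_real (\<beta> $ i))"
proof -
  have "(diag_resolvent \<beta> z ** X) $ i $ j
          = (\<Sum>k\<in>UNIV. (if i = k then 1 / (z - complex_of_real (\<beta> $ i)) else 0) * X $ k $ j)"
    by (simp add: diag_resolvent_def matrix_matrix_mult_def)
  also have "\<dots> = (\<Sum>k\<in>UNIV. if k = i then X $ i $ j / (z - complex_of_real (\<beta> $ i)) else 0)"
    by (intro sum.cong) auto
  finally show ?thesis
    by simp
qed

lemma mult_diag_resolvent:
  "(X ** diag_resolvent \<beta> z) $ i $ j = X $ i $ j / (z - complex_of_real (\<beta> $ j))"
proof -
  have "(X ** diag_resolvent \<beta> z) $ i $ j
          = (\<Sum>k\<in>UNIV. X $ i $ k * (if k = j then 1 / (z - complex_of_real (\<beta> $ k)) else 0))"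
    by (simp add: diag_resolvent_def matrix_matrix_mult_def)
  also have "\<dots> = (\<Sum>k\<in>UNIV. if k = j then X $ i $ j / (z - complex_of_real (\<beta> $ j)) else 0)"
    by (intro sum.cong) auto
  finally show ?thesis
    by simp
qed

lemma diag_resolvent_left_inverse:
  assumes "\<And>i. z \<noteq> complex_of_real (\<beta> $ i)"
  shows "diag_resolvent \<beta> z ** (mat z - diag_real \<beta>) = mat 1"
  using assms by (simp add: vec_eq_iff diag_resolvent_mult mat_def diag_real_def)

lemma diag_resolvent_sandwich:
  "(diag_resolvent \<beta> z ** E ** diag_resolvent \<beta> z) $ i $ j
     = E $ i $ j / ((z - complex_of_real (\<beta> $ i)) * (z - complex_of_real (\<beta> $ j)))"
  by (simp add: diag_resolvent_mult mult_diag_resolvent)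

lemma mat_l1_diag_resolvent:
  fixes \<beta> :: "real^'n"
  assumes e: "0 < e" and gap: "\<And>i. e \<le> cmod (z - complex_of_real (\<beta> $ i))"
  shows "mat_l1 (diag_resolvent \<beta> z) \<le> real CARD('n) / e"
proof -
  have "mat_l1 (diag_resolvent \<beta> z) = (\<Sum>i\<in>UNIV. 1 / cmod (z - complex_of_real (\<beta> $ i)))"
    by (simp add: mat_l1_def diag_resolvent_def norm_divide if_distrib cong: if_cong)
  also have "\<dots> \<le> (\<Sum>i\<in>(UNIV::'n set). 1 / e)"
  proof (rule sum_mono)
    fix i
    show "1 / cmod (z - complex_of_real (\<beta> $ i)) \<le> 1 / e"
      using e gap[of i] by (intro frac_le) auto
  qed
  finally show ?thesis
    by simp
qed

lemma has_contour_integral_inverse_product: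
  assumes \<gamma>: "valid_path \<gamma>" "pathfinish \<gamma> = pathstart \<gamma>"
    and a: "a \<notin> path_image \<gamma>" and b: "b \<notin> path_image \<gamma>"
  shows "((\<lambda>z. 1 / ((z - a) * (z - b))) has_contour_integral
           2 * pi * \<i> * ((winding_number \<gamma> a - winding_number \<gamma> b) / (a - b))) \<gamma>"
proof (cases "a = b")
  case True
  have primitive: "((\<lambda>z. - 1 / (z - b)) has_field_derivative 1 / ((z - a) * (z - b)))
                      (at z within - {b})" if "z \<in> - {b}" for z
    using that True by (auto intro!: derivative_eq_intros simp: power2_eq_square)
  have "((\<lambda>z. 1 / ((z - a) * (z - b))) has_contour_integral 0) \<gamma>"
    by (rule Cauchy_theorem_primitive[OF primitive \<gamma>(1) _ \<gamma>(2)]) (use b in auto)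
  with True show ?thesis
    by simp
next
  case False
  have "((\<lambda>z. (1 / (z - a) - 1 / (z - b)) / (a - b)) has_contour_integral
          (2 * pi * \<i> * winding_number \<gamma> a - 2 * pi * \<i> * winding_number \<gamma> b) / (a - b)) \<gamma>"
    by (intro has_contour_integral_div has_contour_integral_diff has_contour_integral_winding_number
        \<gamma> a b)
  moreover have "(1 / (z - a) - 1 / (z - b)) / (a - b) = 1 / ((z - a) * (z - b))"
    if "z \<in> path_image \<gamma>" for z
  proof -
    have "z - a \<noteq> 0" "z - b \<noteq> 0" "a - b \<noteq> 0"
      using that a b False by auto
    then have "1 / (z - a) - 1 / (z - b) = (a - b) / ((z - a) * (z - b))"
      by (simp add: diff_frac_eq)
    with \<open>a - b \<noteq> 0\<close> show ?thesis
      by simp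
  qed
  ultimately show ?thesis
    by (auto simp: right_diff_distrib diff_divide_distrib elim: has_contour_integral_eq)
qed

text \<open>When \<beta>_i = \<beta>_j the divided difference below is 0 / 0 = 0, which is also the value of
  the contour integral it stands for.\<close>

definition riesz_first_order ::
  "(real \<Rightarrow> complex) \<Rightarrow> real^'n \<Rightarrow> complex^'n^'n \<Rightarrow> complex^'n^'n" where
  "riesz_first_order \<gamma> \<beta> E = (\<chi> i j.
     (if i = j then winding_number \<gamma> (complex_of_real (\<beta> $ i)) else 0)
     + E $ i $ j * ((winding_number \<gamma> (complex_of_real (\<beta> $ i))
                     - winding_number \<gamma> (complex_of_real (\<beta> $ j)))
                    / (complex_of_real (\<beta> $ i) - complex_of_real (\<beta> $ j))))"

lemma has_contour_integral_first_order_resolvent: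
  assumes \<gamma>: "valid_path \<gamma>" "pathfinish \<gamma> = pathstart \<gamma>"
    and off: "\<And>k. complex_of_real (\<beta> $ k) \<notin> path_image \<gamma>"
  shows "((\<lambda>z. (diag_resolvent \<beta> z + diag_resolvent \<beta> z ** E ** diag_resolvent \<beta> z) $ i $ j)
           has_contour_integral 2 * pi * \<i> * riesz_first_order \<gamma> \<beta> E $ i $ j) \<gamma>"
proof -
  have diagonal: "((\<lambda>z. diag_resolvent \<beta> z $ i $ j) has_contour_integral
           2 * pi * \<i> * (if i = j then winding_number \<gamma> (complex_of_real (\<beta> $ i)) else 0)) \<gamma>"
    using has_contour_integral_winding_number[OF \<gamma>(1) off[of i]]
    by (cases "i = j") (simp_all add: diag_resolvent_def has_contour_integral_0)
  have sandwich: "((\<lambda>z. (diag_resolvent \<beta> z ** E ** diag_resolvent \<beta> z) $ i $ j) has_contour_integral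
           E $ i $ j * (2 * pi * \<i> * ((winding_number \<gamma> (complex_of_real (\<beta> $ i))
              - winding_number \<gamma> (complex_of_real (\<beta> $ j)))
             / (complex_of_real (\<beta> $ i) - complex_of_real (\<beta> $ j))))) \<gamma>"
    using has_contour_integral_lmul[OF has_contour_integral_inverse_product[OF \<gamma> off off]]
    by (simp add: diag_resolvent_sandwich)
  show ?thesis
    using has_contour_integral_add[OF diagonal sandwich]
    by (simp add: riesz_first_order_def algebra_simps)
qed

lemma perturbed_diag_resolvent:
  fixes \<beta> :: "real^'n" and E :: "complex^'n^'n"
  assumes e: "0 < e" and gap: "\<And>i. e \<le> cmod (z - complex_of_real (\<beta> $ i))"
    and small: "2 * real CARD('n) ^ 3 * norm E \<le> e"
  shows "invertible (mat z - (diag_real \<beta> + E))"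
    and "mat_l1 (matrix_inv (mat z - (diag_real \<beta> + E))) \<le> 2 * real CARD('n) / e"
    and "mat_l1 (matrix_inv (mat z - (diag_real \<beta> + E))
           - (diag_resolvent \<beta> z + diag_resolvent \<beta> z ** E ** diag_resolvent \<beta> z))
         \<le> 2 * real CARD('n) ^ 7 / e ^ 3 * (norm E)\<^sup>2"
proof -
  let ?N = "real CARD('n)"
  let ?R0 = "diag_resolvent \<beta> z"
  have split: "mat z - (diag_real \<beta> + E) = (mat z - diag_real \<beta>) - E"
    by (simp add: algebra_simps)
  have "z \<noteq> complex_of_real (\<beta> $ i)" for i
    using gap[of i] e by auto
  then have left_inverse: "?R0 ** (mat z - diag_real \<beta>) = mat 1"
    by (rule diag_resolvent_left_inverse)
  have R0: "mat_l1 ?R0 \<le> ?N / e"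
    by (rule mat_l1_diag_resolvent[OF e gap])
  have E: "mat_l1 E \<le> ?N * ?N * norm E"
    using mat_l1_le_norm[of E] by simp
  have "mat_l1 ?R0 * mat_l1 E \<le> ?N / e * (?N * ?N * norm E)"
    using e by (intro mult_mono R0 E mat_l1_nonneg) (simp_all add: zero_le_divide_iff)
  also have "\<dots> \<le> 1 / 2"
    using small e by (simp add: field_simps power3_eq_cube)
  finally have "mat_l1 ?R0 * mat_l1 E \<le> 1 / 2" .
  note second_order = resolvent_second_order[OF left_inverse this, unfolded split[symmetric]]
  show "invertible (mat z - (diag_real \<beta> + E))"
    by (rule second_order(1))
  show "mat_l1 (matrix_inv (mat z - (diag_real \<beta> + E))) \<le> 2 * ?N / e"
    using second_order(2) R0 by simp
  have "2 * mat_l1 ?R0 ^ 3 * mat_l1 E ^ 2 \<le> 2 * (?N / e) ^ 3 * (?N * ?N * norm E) ^ 2"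
    using e by (intro mult_mono mult_left_mono power_mono R0 E mat_l1_nonneg zero_le_power)
      (simp_all add: zero_le_divide_iff)
  also have "\<dots> = 2 * ?N ^ 7 / e ^ 3 * (norm E)\<^sup>2"
    by (simp add: field_simps power2_eq_square power3_eq_cube eval_nat_numeral)
  finally show "mat_l1 (matrix_inv (mat z - (diag_real \<beta> + E)) - (?R0 + ?R0 ** E ** ?R0))
                  \<le> 2 * ?N ^ 7 / e ^ 3 * (norm E)\<^sup>2"
    using second_order(3) by linarith
qed

lemma riesz_proj_circlepath_entry_approx:
  fixes A :: "complex^'n^'n"
  assumes r: "0 < r"
    and cont: "continuous_on (path_image (circlepath c r)) (\<lambda>z. matrix_inv (mat z - A) $ i $ j)"
    and f: "(f has_contour_integral 2 * pi * \<i> * w) (circlepath c r)"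
    and close: "\<And>z. cmod (z - c) = r \<Longrightarrow> norm (matrix_inv (mat z - A) $ i $ j - f z) \<le> B"
  shows "norm (riesz_proj (circlepath c r) A $ i $ j - w) \<le> B * r"
proof -
  define I where "I = contour_integral (circlepath c r) (\<lambda>z. matrix_inv (mat z - A) $ i $ j)"
  have "((\<lambda>z. matrix_inv (mat z - A) $ i $ j) has_contour_integral I) (circlepath c r)"
    unfolding I_def by (intro has_contour_integral_integral contour_integrable_continuous_circlepath cont)
  from has_contour_integral_diff[OF this f]
  have "norm (I - 2 * pi * \<i> * w) \<le> B * (2 * pi * r)"
  proof (rule has_contour_integral_bound_circlepath)
    show "0 \<le> B"
      using order_trans[OF norm_ge_zero close[of "c + complex_of_real r"]] r by simp
  qed (use r close in auto)
  moreover have "riesz_proj (circlepath c r) A $ i $ j - w = (I - 2 * pi * \<i> * w) / (2 * pi * \<i>)"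
    by (simp add: riesz_proj_def I_def diff_divide_distrib)
  ultimately show ?thesis
    using pi_gt_zero by (simp add: norm_divide norm_mult pos_divide_le_eq mult_ac)
qed

lemma riesz_proj_circlepath_first_order:
  fixes \<beta> :: "real^'n" and E :: "complex^'n^'n"
  assumes r: "0 < r" and e: "0 < e"
    and gap: "\<And>z i. cmod (z - c) = r \<Longrightarrow> e \<le> cmod (z - complex_of_real (\<beta> $ i))"
    and small: "2 * real CARD('n) ^ 3 * norm E \<le> e"
  shows "\<forall>z\<in>path_image (circlepath c r). invertible (mat z - (diag_real \<beta> + E))"
    and "norm (riesz_proj (circlepath c r) (diag_real \<beta> + E) - riesz_first_order (circlepath c r) \<beta> E)
           \<le> 2 * real CARD('n) ^ 9 / e ^ 3 * r * (norm E)\<^sup>2"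
proof -
  let ?N = "real CARD('n)"
  let ?\<Gamma> = "circlepath c r"
  let ?A = "diag_real \<beta> + E"
  define F where "F z = diag_resolvent \<beta> z + diag_resolvent \<beta> z ** E ** diag_resolvent \<beta> z" for z
  define B where "B = 2 * ?N ^ 7 / e ^ 3 * (norm E)\<^sup>2"
  have on_circle: "z \<in> path_image ?\<Gamma> \<longleftrightarrow> cmod (z - c) = r" for z
    using r by (simp add: dist_norm norm_minus_commute)
  have inv: "invertible (mat z - ?A)"
    and bound: "mat_l1 (matrix_inv (mat z - ?A)) \<le> 2 * ?N / e"
    and approx: "mat_l1 (matrix_inv (mat z - ?A) - F z) \<le> B" if "cmod (z - c) = r" for z
    using perturbed_diag_resolvent[OF e gap[OF that] small] by (simp_all add: F_def B_def)
  show "\<forall>z\<in>path_image ?\<Gamma>. invertible (mat z - ?A)"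
    using inv on_circle by blast
  have off: "complex_of_real (\<beta> $ k) \<notin> path_image ?\<Gamma>" for k
    using gap[of "complex_of_real (\<beta> $ k)" k] e on_circle by auto
  have "norm ((riesz_proj ?\<Gamma> ?A - riesz_first_order ?\<Gamma> \<beta> E) $ i $ j) \<le> B * r" for i j
  proof -
    have "((\<lambda>z. F z $ i $ j) has_contour_integral 2 * pi * \<i> * riesz_first_order ?\<Gamma> \<beta> E $ i $ j) ?\<Gamma>"
      unfolding F_def by (rule has_contour_integral_first_order_resolvent[OF valid_path_circlepath _ off]) simp
    moreover have "norm (matrix_inv (mat z - ?A) $ i $ j - F z $ i $ j) \<le> B" if "cmod (z - c) = r" for z
      using order_trans[OF entry_norm_le_mat_l1 approx[OF that]] by simp
    ultimately show ?thesis
      using inv bound on_circle r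
      by (simp, intro riesz_proj_circlepath_entry_approx continuous_on_resolvent_entry) auto
  qed
  then have "norm (riesz_proj ?\<Gamma> ?A - riesz_first_order ?\<Gamma> \<beta> E) \<le> ?N * ?N * (B * r)"
    by (rule norm_le_entry_bound)
  also have "\<dots> = 2 * ?N ^ 9 / e ^ 3 * r * (norm E)\<^sup>2"
    by (simp add: B_def eval_nat_numeral mult_ac)
  finally show "norm (riesz_proj ?\<Gamma> ?A - riesz_first_order ?\<Gamma> \<beta> E) \<le> 2 * ?N ^ 9 / e ^ 3 * r * (norm E)\<^sup>2" .
qed

lemma circle_gap_of_near:
  fixes a b c z :: complex
  assumes near: "cmod (b - a) < e" and far: "2 * e \<le> \<bar>cmod (a - c) - r\<bar>"
  shows "cmod (z - c) = r \<Longrightarrow> e \<le> cmod (z - b)"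
    and "cmod (a - c) < r \<Longrightarrow> cmod (b - c) < r"
    and "r < cmod (a - c) \<Longrightarrow> r < cmod (b - c)"
proof -
  have "\<bar>cmod (a - c) - cmod (z - c)\<bar> \<le> cmod (z - a)"
    using norm_triangle_ineq3[of "a - c" "z - c"] by (simp add: norm_minus_commute)
  moreover have "cmod (z - a) \<le> cmod (z - b) + cmod (b - a)"
    using norm_triangle_ineq[of "z - b" "b - a"] by simp
  ultimately show "cmod (z - c) = r \<Longrightarrow> e \<le> cmod (z - b)"
    using near far by linarith
  have "\<bar>cmod (b - c) - cmod (a - c)\<bar> \<le> cmod (b - a)"
    using norm_triangle_ineq3[of "b - c" "a - c"] by simp
  then show "cmod (a - c) < r \<Longrightarrow> cmod (b - c) < r" and "r < cmod (a - c) \<Longrightarrow> r < cmod (b - c)"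
    using near far by linarith+
qed

lemma winding_number_circlepath_outside:
  assumes "0 \<le> r" and "r < cmod (b - c)"
  shows "winding_number (circlepath c r) b = 0"
proof -
  have "b \<notin> cball c r"
    using assms by (simp add: dist_norm norm_minus_commute)
  then show ?thesis
    using assms(1) by (intro winding_number_zero_outside[OF _ convex_cball]) (auto simp: dist_norm)
qed

lemma obtain_pos_lower_bound:
  fixes f :: "'i::finite \<Rightarrow> real"
  assumes "\<And>i. 0 < f i"
  obtains e where "0 < e" and "\<And>i. e \<le> f i"
proof
  show "0 < Min (range f)"
    using assms by (simp add: Min_gr_iff)
  show "Min (range f) \<le> f i" for i
    by (simp add: Min_le)
qed

lemma riesz_first_order_eq_approx_P1:
  assumes herm: "hermitian E" and zero: "\<And>i. i \<notin> S \<Longrightarrow> \<beta> $ i = 0"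
    and nonzero: "\<And>i. i \<in> S \<Longrightarrow> \<beta> $ i \<noteq> 0"
    and inside: "\<And>i. i \<in> S \<Longrightarrow> winding_number \<gamma> (complex_of_real (\<beta> $ i)) = 1"
    and outside: "winding_number \<gamma> 0 = 0"
  shows "riesz_first_order \<gamma> \<beta> E = approx_P1 S \<beta> E"
  unfolding vec_eq_iff
proof (intro allI)
  fix i j
  have "E $ i $ j = cnj (E $ j $ i)"
    using herm unfolding hermitian_def by blast
  then show "riesz_first_order \<gamma> \<beta> E $ i $ j = approx_P1 S \<beta> E $ i $ j"
    by (cases "i \<in> S"; cases "j \<in> S")
      (auto simp: riesz_first_order_def approx_P1_def inside outside zero nonzero)
qed

lemma riesz_first_order_eq_approx_P0:
  assumes herm: "hermitian E" and zero: "\<And>i. i \<notin> S \<Longrightarrow> \<beta> $ i = 0"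
    and nonzero: "\<And>i. i \<in> S \<Longrightarrow> \<beta> $ i \<noteq> 0"
    and outside: "\<And>i. i \<in> S \<Longrightarrow> winding_number \<gamma> (complex_of_real (\<beta> $ i)) = 0"
    and inside: "winding_number \<gamma> 0 = 1"
  shows "riesz_first_order \<gamma> \<beta> E = approx_P0 S \<beta> E"
  unfolding vec_eq_iff
proof (intro allI)
  fix i j
  have "E $ i $ j = cnj (E $ j $ i)"
    using herm unfolding hermitian_def by blast
  then show "riesz_first_order \<gamma> \<beta> E $ i $ j = approx_P0 S \<beta> E $ i $ j"
    by (cases "i \<in> S"; cases "j \<in> S")
      (auto simp: riesz_first_order_def approx_P0_def inside outside zero nonzero)
qed

theorem lemma3p2:
  fixes \<alpha> :: "real^'n" and S :: "'n set"
    and c1 c0 :: complex and r1 r0 :: real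
  assumes alpha_pos: "\<forall>i\<in>S. \<alpha> $ i > 0"
    and alpha_zero: "\<forall>i. i \<notin> S \<longrightarrow> \<alpha> $ i = 0"
    and r1: "r1 > 0" and G1_encl: "\<forall>i\<in>S. cmod (complex_of_real (\<alpha> $ i) - c1) < r1"
    and G1_excl: "cmod (0 - c1) > r1"
    and r0: "r0 > 0" and G0_encl: "cmod (0 - c0) < r0"
    and G0_excl: "\<forall>i\<in>S. cmod (complex_of_real (\<alpha> $ i) - c0) > r0"
  shows "\<exists>\<rho>>0. \<exists>\<delta>>0. \<exists>K. \<forall>(\<beta>::real^'n) (E::complex^'n^'n).
           (\<forall>i\<in>S. \<beta> $ i > 0 \<and> \<bar>\<beta> $ i - \<alpha> $ i\<bar> < \<rho>) \<and> (\<forall>i. i \<notin> S \<longrightarrow> \<beta> $ i = 0)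
           \<and> hermitian E \<and> norm E < \<delta> \<longrightarrow>
           (\<forall>z \<in> path_image (circlepath c0 r0) \<union> path_image (circlepath c1 r1).
               invertible (mat z - (diag_real \<beta> + E)))
         \<and> norm (riesz_proj (circlepath c1 r1) (diag_real \<beta> + E) - approx_P1 S \<beta> E) \<le> K * (norm E)\<^sup>2
         \<and> norm (riesz_proj (circlepath c0 r0) (diag_real \<beta> + E) - approx_P0 S \<beta> E) \<le> K * (norm E)\<^sup>2"
proof -
  let ?N = "real CARD('n)"
  let ?a = "\<lambda>i. complex_of_real (\<alpha> $ i)"
  define d where "d i = min \<bar>cmod (?a i - c1) - r1\<bar> \<bar>cmod (?a i - c0) - r0\<bar> / 2" for i
  have "0 < d i" for i
    using assms by (cases "i \<in> S") (auto simp: d_def)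
  then obtain e where e: "0 < e" and e_le: "\<And>i. e \<le> d i"
    using obtain_pos_lower_bound[of d] by blast
  then have far1: "2 * e \<le> \<bar>cmod (?a i - c1) - r1\<bar>" and far0: "2 * e \<le> \<bar>cmod (?a i - c0) - r0\<bar>"
    for i
    using e_le[of i] by (simp_all add: d_def field_simps)
  let ?C = "2 * ?N ^ 9 / e ^ 3"
  have \<delta>: "0 < e / (2 * ?N ^ 3)"
    using e by simp
  show ?thesis
  proof (rule exI[of _ e], rule conjI[OF e], rule exI, rule conjI[OF \<delta>], rule exI[of _ "?C * (r0 + r1)"],
      intro allI impI conjI)
    fix \<beta> :: "real^'n" and E :: "complex^'n^'n"
    assume H: "(\<forall>i\<in>S. \<beta> $ i > 0 \<and> \<bar>\<beta> $ i - \<alpha> $ i\<bar> < e) \<and> (\<forall>i. i \<notin> S \<longrightarrow> \<beta> $ i = 0)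
      \<and> hermitian E \<and> norm E < e / (2 * ?N ^ 3)"
    then have zero: "\<And>i. i \<notin> S \<Longrightarrow> \<beta> $ i = 0" and nonzero: "\<And>i. i \<in> S \<Longrightarrow> \<beta> $ i \<noteq> 0"
      and herm: "hermitian E" and small: "2 * ?N ^ 3 * norm E \<le> e"
      by (auto simp: field_simps)
    have near: "cmod (complex_of_real (\<beta> $ i) - ?a i) < e" for i
      using H alpha_zero e by (cases "i \<in> S") (auto simp flip: of_real_diff)
    note gap1 = circle_gap_of_near[OF near far1] and gap0 = circle_gap_of_near[OF near far0]
    note P1 = riesz_proj_circlepath_first_order[where c = c1, OF r1 e gap1(1) small]
    note P0 = riesz_proj_circlepath_first_order[where c = c0, OF r0 e gap0(1) small]
    have first1: "riesz_first_order (circlepath c1 r1) \<beta> E = approx_P1 S \<beta> E"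
      using G1_encl G1_excl r1 gap1(2)
      by (intro riesz_first_order_eq_approx_P1 herm zero nonzero winding_number_circlepath
          winding_number_circlepath_outside) auto
    have first0: "riesz_first_order (circlepath c0 r0) \<beta> E = approx_P0 S \<beta> E"
      using G0_encl G0_excl r0 gap0(3)
      by (intro riesz_first_order_eq_approx_P0 herm zero nonzero winding_number_circlepath
          winding_number_circlepath_outside) auto
    have "?C * r * (norm E)\<^sup>2 \<le> ?C * (r0 + r1) * (norm E)\<^sup>2" if "0 \<le> r" "r \<le> r0 + r1" for r
      using that e by (intro mult_right_mono mult_left_mono) simp_all
    with P1(2) P0(2) r0 r1 show
      "norm (riesz_proj (circlepath c1 r1) (diag_real \<beta> + E) - approx_P1 S \<beta> E)
         \<le> ?C * (r0 + r1) * (norm E)\<^sup>2"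
      "norm (riesz_proj (circlepath c0 r0) (diag_real \<beta> + E) - approx_P0 S \<beta> E)
         \<le> ?C * (r0 + r1) * (norm E)\<^sup>2"
      unfolding first1 first0 by (smt (verit))+
    show "\<forall>z \<in> path_image (circlepath c0 r0) \<union> path_image (circlepath c1 r1).
            invertible (mat z - (diag_real \<beta> + E))"
      using P1(1) P0(1) by blast
  qed
qed

end
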